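(* Let $X_1,\dots,X_n$ be features and $Y$ a target that is not a.s. constant, $\mathcal{F}=\{1,\dots,n\}$, and $i\in\mathcal{F}$. If $\mathrm{FI}(i)=1$, then $\mathrm{Dep}(X_i,Y)=1$ and $\mathrm{FI}(j)=0$ for every $j\in\mathcal{F}\setminus\{i\}$ (equivalently, every other feature $j$ satisfies $\mathrm{Dep}(S\cup\{j\},Y)=\mathrm{Dep}(S,Y)$ for all $S\subseteq\mathcal{F}\setminus\{j\}$).
   Context: All random variables are discrete with finite support and defined on a common probability space. For discrete random variables (or random vectors) $X$ and $Y$, define $$\mathrm{UD}(X,Y):=\sum_x p_X(x)\sum_y \bigl|p_{Y\mid X=x}(y)-p_Y(y)\bigr|,$$ and, when $Y$ is not almost surely constant, $\mathrm{Dep}(X,Y):=\mathrm{UD}(X,Y)/\mathrm{UD}(Y,Y)$. Given features $X_1,\dots,X_n$ with index set $\mathcal{F}=\{1,\dots,n\}$ and $S\subseteq\mathcal{F}$, write $X_S=(X_i)_{i\in S}$ ($X_\emptyset$ constant) and $\mathrm{Dep}(S,Y):=\mathrm{Dep}(X_S,Y)$. The Berkelmans–Pries feature importance is $$\mathrm{FI}(i):=\sum_{S\subseteq\mathcal{F}\setminus\{i\}}\frac{|S|!\,(n-|S|-1)!}{n!}\bigl(\mathrm{Dep}(S\cup\{i\},Y)-\mathrm{Dep}(S,Y)\bigr).$$ *)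

theory Defs
  imports "HOL-Probability.Probability"
begin

definition UD :: "'w pmf \<Rightarrow> ('w \<Rightarrow> 'x) \<Rightarrow> ('w \<Rightarrow> 'y) \<Rightarrow> real" where
  "UD M X Y =
     (\<Sum>x\<in>X ` set_pmf M. measure_pmf.prob M {w. X w = x} *
        (\<Sum>y\<in>Y ` set_pmf M.
           \<bar>measure_pmf.prob M {w. X w = x \<and> Y w = y} / measure_pmf.prob M {w. X w = x}
            - measure_pmf.prob M {w. Y w = y}\<bar>))"

definition Dep :: "'w pmf \<Rightarrow> ('w \<Rightarrow> 'x) \<Rightarrow> ('w \<Rightarrow> 'y) \<Rightarrow> real" where
  "Dep M X Y = UD M X Y / UD M Y Y"

definition featvec :: "(nat \<Rightarrow> 'w \<Rightarrow> 'v) \<Rightarrow> nat set \<Rightarrow> 'w \<Rightarrow> (nat \<Rightarrow> 'v)" where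
  "featvec X S = (\<lambda>w. restrict (\<lambda>i. X i w) S)"

definition DepS :: "'w pmf \<Rightarrow> (nat \<Rightarrow> 'w \<Rightarrow> 'v) \<Rightarrow> nat set \<Rightarrow> ('w \<Rightarrow> 'y) \<Rightarrow> real" where
  "DepS M X S Y = Dep M (featvec X S) Y"

definition FI :: "'w pmf \<Rightarrow> (nat \<Rightarrow> 'w \<Rightarrow> 'v) \<Rightarrow> nat \<Rightarrow> ('w \<Rightarrow> 'y) \<Rightarrow> nat \<Rightarrow> real" where
  "FI M X n Y i =
     (\<Sum>S\<in>Pow ({1..n} - {i}).
        (fact (card S) * fact (n - card S - 1) / fact n) *
        (DepS M X (S \<union> {i}) Y - DepS M X S Y))"

end

theory Submission imports Defs begin

text \<open>Dependency is always in [0,1]: rewriting UD as \<open>\<Sum>\<^sub>x \<Sum>\<^sub>y |P(x,y) - P(x)P(y)|\<close>,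
  for each fixed y the inner sum over x is at most \<open>2 P(y)(1 - P(y))\<close>, with equality when X = Y.
  The Shapley weights are positive and sum to 1, so \<open>FI(i) = 1\<close> forces every marginal
  contribution of i to equal 1, i.e. \<open>Dep(S \<union> {i}) = 1\<close> and \<open>Dep(S) = 0\<close> for all S avoiding i.
  Hence Dep of a feature set is 1 or 0 according as it contains i, and no other feature
  ever changes it.\<close>

lemma measure_pmf_prob_sum_fibres:
  assumes "finite (f ` set_pmf M)"
  shows "(\<Sum>x\<in>f ` set_pmf M. measure_pmf.prob M {w. f w = x \<and> P w}) = measure_pmf.prob M {w. P w}"
proof -
  have "(\<Sum>x\<in>f ` set_pmf M. measure_pmf.prob M {w. f w = x \<and> P w})
     = measure_pmf.prob M (\<Union>x\<in>f ` set_pmf M. {w. f w = x \<and> P w})"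
    using assms by (intro measure_pmf.finite_measure_finite_Union[symmetric])
      (auto simp: disjoint_family_on_def)
  also have "\<dots> = measure_pmf.prob M ((\<Union>x\<in>f ` set_pmf M. {w. f w = x \<and> P w}) \<inter> set_pmf M)"
    by (simp add: measure_Int_set_pmf)
  also have "(\<Union>x\<in>f ` set_pmf M. {w. f w = x \<and> P w}) \<inter> set_pmf M = {w. P w} \<inter> set_pmf M"
    by auto
  also have "measure_pmf.prob M \<dots> = measure_pmf.prob M {w. P w}"
    by (simp add: measure_Int_set_pmf)
  finally show ?thesis .
qed

lemma UD_eq_sum_abs_joint_minus_product:
  "UD M X Y = (\<Sum>x\<in>X ` set_pmf M. \<Sum>y\<in>Y ` set_pmf M.
     \<bar>measure_pmf.prob M {w. X w = x \<and> Y w = y}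
      - measure_pmf.prob M {w. X w = x} * measure_pmf.prob M {w. Y w = y}\<bar>)"
  unfolding UD_def sum_distrib_left
proof (intro sum.cong refl)
  have scale: "p * \<bar>a / p - b\<bar> = \<bar>a - p * b\<bar>" if "0 < p" for p a b :: real
  proof -
    have "a - p * b = p * (a / p - b)" using that by (simp add: field_simps)
    then show ?thesis using that by (simp add: abs_mult)
  qed
  fix x y assume "x \<in> X ` set_pmf M"
  then obtain w0 where "w0 \<in> set_pmf M" "x = X w0" by auto
  then have "measure_pmf.prob M {w. X w = x} > 0" by (intro measure_pmf_posI[of w0]) auto
  then show "measure_pmf.prob M {w. X w = x} *
      \<bar>measure_pmf.prob M {w. X w = x \<and> Y w = y} / measure_pmf.prob M {w. X w = x}
       - measure_pmf.prob M {w. Y w = y}\<bar>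
    = \<bar>measure_pmf.prob M {w. X w = x \<and> Y w = y}
       - measure_pmf.prob M {w. X w = x} * measure_pmf.prob M {w. Y w = y}\<bar>"
    by (rule scale)
qed

lemma UD_nonneg: "0 \<le> UD M X Y"
  unfolding UD_eq_sum_abs_joint_minus_product by (intro sum_nonneg) auto

lemma sum_abs_joint_minus_product_le:
  assumes "finite (X ` set_pmf M)"
  shows "(\<Sum>x\<in>X ` set_pmf M. \<bar>measure_pmf.prob M {w. X w = x \<and> Y w = y}
            - measure_pmf.prob M {w. X w = x} * measure_pmf.prob M {w. Y w = y}\<bar>)
     \<le> 2 * measure_pmf.prob M {w. Y w = y} * (1 - measure_pmf.prob M {w. Y w = y})"
proof -
  define q where "q = measure_pmf.prob M {w. Y w = y}"
  define a where "a x = measure_pmf.prob M {w. X w = x \<and> Y w = y}" for x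
  define b where "b x = measure_pmf.prob M {w. X w = x}" for x
  let ?I = "X ` set_pmf M"
  have sum_a: "(\<Sum>x\<in>?I. a x) = q"
    unfolding a_def q_def using measure_pmf_prob_sum_fibres[OF assms, of "\<lambda>w. Y w = y"] by simp
  have sum_b: "(\<Sum>x\<in>?I. b x) = 1"
    unfolding b_def using measure_pmf_prob_sum_fibres[OF assms, of "\<lambda>w. True"] by simp
  have a_le_b: "a x \<le> b x" for x
    unfolding a_def b_def by (intro measure_pmf.finite_measure_mono) auto
  have q: "0 \<le> q" "q \<le> 1" and a_nonneg: "0 \<le> a x" for x
    unfolding q_def a_def by auto
  \<comment> \<open>The signed deviations sum to \<open>q - 1 \<cdot> q = 0\<close>, so the absolute sum is twice the positive part.\<close>
  have "(\<Sum>x\<in>?I. \<bar>a x - b x * q\<bar>) = (\<Sum>x\<in>?I. 2 * max (a x - b x * q) 0 - (a x - b x * q))"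
    by (intro sum.cong refl) (auto simp: max_def abs_if)
  also have "\<dots> = 2 * (\<Sum>x\<in>?I. max (a x - b x * q) 0) - ((\<Sum>x\<in>?I. a x) - (\<Sum>x\<in>?I. b x) * q)"
    by (simp add: sum_subtractf sum_distrib_left sum_distrib_right)
  also have "\<dots> = 2 * (\<Sum>x\<in>?I. max (a x - b x * q) 0)"
    using sum_a sum_b by simp
  also have "\<dots> \<le> 2 * (\<Sum>x\<in>?I. a x * (1 - q))"
  proof -
    have "max (a x - b x * q) 0 \<le> a x * (1 - q)" for x
      using q a_nonneg[of x] mult_right_mono[OF a_le_b[of x] q(1)] mult_right_mono[OF q(2) a_nonneg[of x]]
      by (auto simp: max_def algebra_simps)
    then show ?thesis by (intro mult_left_mono sum_mono) auto
  qed
  also have "\<dots> = 2 * q * (1 - q)"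
    using sum_a by (simp add: sum_distrib_right[symmetric])
  finally show ?thesis unfolding a_def b_def q_def .
qed

lemma sum_abs_joint_minus_product_self:
  assumes fin: "finite (Y ` set_pmf M)" and y: "y \<in> Y ` set_pmf M"
  shows "(\<Sum>x\<in>Y ` set_pmf M. \<bar>measure_pmf.prob M {w. Y w = x \<and> Y w = y}
            - measure_pmf.prob M {w. Y w = x} * measure_pmf.prob M {w. Y w = y}\<bar>)
     = 2 * measure_pmf.prob M {w. Y w = y} * (1 - measure_pmf.prob M {w. Y w = y})"
proof -
  define q where "q x = measure_pmf.prob M {w. Y w = x}" for x
  let ?I = "Y ` set_pmf M"
  have q: "0 \<le> q x" "q x \<le> 1" for x unfolding q_def by auto
  have "(\<Sum>x\<in>?I. q x) = 1"
    unfolding q_def using measure_pmf_prob_sum_fibres[OF fin, of "\<lambda>w. True"] by simp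
  then have rest: "(\<Sum>x\<in>?I - {y}. q x) = 1 - q y"
    using sum.remove[OF fin y, of q] by simp
  have off_diagonal: "\<bar>measure_pmf.prob M {w. Y w = x \<and> Y w = y} - q x * q y\<bar> = q x * q y"
    if "x \<noteq> y" for x
  proof -
    have empty: "{w. Y w = x \<and> Y w = y} = {}" using that by auto
    show ?thesis using q[of x] q[of y] by (simp only: empty) simp
  qed
  have "(\<Sum>x\<in>?I. \<bar>measure_pmf.prob M {w. Y w = x \<and> Y w = y} - q x * q y\<bar>)
     = \<bar>q y - q y * q y\<bar> + (\<Sum>x\<in>?I - {y}. \<bar>measure_pmf.prob M {w. Y w = x \<and> Y w = y} - q x * q y\<bar>)"
    by (subst sum.remove[OF fin y]) (simp_all add: q_def)
  also have "(\<Sum>x\<in>?I - {y}. \<bar>measure_pmf.prob M {w. Y w = x \<and> Y w = y} - q x * q y\<bar>)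
     = (\<Sum>x\<in>?I - {y}. q x * q y)"
    by (rule sum.cong) (auto intro: off_diagonal)
  also have "\<dots> = (1 - q y) * q y"
    using rest by (simp add: sum_distrib_right[symmetric])
  also have "\<bar>q y - q y * q y\<bar> = q y * (1 - q y)"
    using q[of y] by (simp add: algebra_simps mult_left_le)
  finally show ?thesis unfolding q_def by (simp add: algebra_simps)
qed

lemma UD_le_UD_self:
  assumes fin: "finite (Y ` set_pmf M)"
  shows "UD M X Y \<le> UD M Y Y"
proof (cases "finite (X ` set_pmf M)")
  case False
  then have "UD M X Y = 0" unfolding UD_eq_sum_abs_joint_minus_product by simp
  then show ?thesis using UD_nonneg[of M Y Y] by simp
next
  case True
  have "UD M X Y = (\<Sum>y\<in>Y ` set_pmf M. \<Sum>x\<in>X ` set_pmf M.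
     \<bar>measure_pmf.prob M {w. X w = x \<and> Y w = y}
      - measure_pmf.prob M {w. X w = x} * measure_pmf.prob M {w. Y w = y}\<bar>)"
    unfolding UD_eq_sum_abs_joint_minus_product by (rule sum.swap)
  also have "\<dots> \<le> (\<Sum>y\<in>Y ` set_pmf M.
      2 * measure_pmf.prob M {w. Y w = y} * (1 - measure_pmf.prob M {w. Y w = y}))"
    by (intro sum_mono sum_abs_joint_minus_product_le True)
  also have "\<dots> = (\<Sum>y\<in>Y ` set_pmf M. \<Sum>x\<in>Y ` set_pmf M.
     \<bar>measure_pmf.prob M {w. Y w = x \<and> Y w = y}
      - measure_pmf.prob M {w. Y w = x} * measure_pmf.prob M {w. Y w = y}\<bar>)"
    by (intro sum.cong refl sum_abs_joint_minus_product_self[symmetric] fin)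
  also have "\<dots> = UD M Y Y"
    unfolding UD_eq_sum_abs_joint_minus_product by (rule sum.swap)
  finally show ?thesis .
qed

lemma Dep_nonneg: "0 \<le> Dep M X Y"
  unfolding Dep_def using UD_nonneg[of M X Y] UD_nonneg[of M Y Y] by simp

lemma Dep_le_1:
  assumes "finite (Y ` set_pmf M)"
  shows "Dep M X Y \<le> 1"
  unfolding Dep_def using UD_le_UD_self[OF assms, of X] UD_nonneg[of M X Y]
  by (auto simp: divide_le_eq_1)

lemma UD_comp_inj:
  assumes "inj g"
  shows "UD M (\<lambda>w. g (X w)) Y = UD M X Y"
proof -
  have image: "(\<lambda>w. g (X w)) ` set_pmf M = g ` X ` set_pmf M" by auto
  have fibres: "{w. g (X w) = g x} = {w. X w = x}" "{w. g (X w) = g x \<and> P w} = {w. X w = x \<and> P w}"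
    for x P
    using assms by (auto dest: injD)
  show ?thesis unfolding UD_def image
    by (subst sum.reindex) (use assms in \<open>auto simp: fibres intro: inj_on_subset\<close>)
qed

lemma DepS_singleton: "DepS M (X :: nat \<Rightarrow> 'w \<Rightarrow> 'v) {i} Y = Dep M (X i) Y"
proof -
  define g where "g v = restrict (\<lambda>k. v) {i}" for v :: 'v
  have "inj g" unfolding g_def by (rule injI) (metis restrict_apply' singletonI)
  have "featvec X {i} = (\<lambda>w. g (X i w))"
    unfolding featvec_def g_def by (auto simp: restrict_def fun_eq_iff)
  then show ?thesis
    unfolding DepS_def Dep_def using UD_comp_inj[OF \<open>inj g\<close>, of M "X i" Y] by simp
qed

lemma sum_Pow_Shapley_weights:
  assumes "finite A"
  shows "(\<Sum>S\<in>Pow A. fact (card S) * fact (card A - card S) / fact (Suc (card A)) :: real) = 1"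
proof -
  define m where "m = card A"
  define f where "f k = fact k * fact (m - k) / (fact (Suc m) :: real)" for k
  have "(\<Sum>S\<in>Pow A. f (card S)) = (\<Sum>k\<in>{0..m}. \<Sum>S\<in>{S\<in>Pow A. card S = k}. f (card S))"
    using assms unfolding m_def by (intro sum.group[symmetric]) (auto intro: card_mono)
  also have "\<dots> = (\<Sum>k\<in>{0..m}. of_nat (m choose k) * f k)"
  proof (intro sum.cong refl)
    fix k
    have "{S\<in>Pow A. card S = k} = {B. B \<subseteq> A \<and> card B = k}" by auto
    then show "(\<Sum>S\<in>{S\<in>Pow A. card S = k}. f (card S)) = of_nat (m choose k) * f k"
      using n_subsets[OF assms] unfolding m_def by simp
  qed
  also have "\<dots> = (\<Sum>k\<in>{0..m}. 1 / real (Suc m))"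
  proof (intro sum.cong refl)
    fix k assume "k \<in> {0..m}"
    then have "fact k * fact (m - k) * (m choose k) = (fact m :: real)"
      using binomial_fact_lemma[of k m] by (metis atLeastAtMost_iff of_nat_fact of_nat_mult)
    then show "of_nat (m choose k) * f k = 1 / real (Suc m)"
      unfolding f_def by (simp add: field_simps del: of_nat_Suc)
  qed
  also have "\<dots> = 1" by simp
  finally show ?thesis unfolding f_def m_def .
qed

lemma convex_combination_eq_upper_bound_imp_eq:
  fixes c d :: "'a \<Rightarrow> real"
  assumes "finite A" and pos: "\<And>x. x \<in> A \<Longrightarrow> 0 < c x" and "sum c A = 1"
    and le: "\<And>x. x \<in> A \<Longrightarrow> d x \<le> 1" and "(\<Sum>x\<in>A. c x * d x) = 1"
    and "x \<in> A"
  shows "d x = 1"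
proof -
  have nonneg: "0 \<le> c y * (1 - d y)" if "y \<in> A" for y
    using pos[OF that] le[OF that] by simp
  have "(\<Sum>y\<in>A. c y * (1 - d y)) = 0"
    using assms by (simp add: right_diff_distrib sum_subtractf)
  then have "c x * (1 - d x) = 0"
    using sum_nonneg_eq_0_iff[OF \<open>finite A\<close> nonneg] \<open>x \<in> A\<close> by simp
  then show ?thesis using pos[OF \<open>x \<in> A\<close>] by simp
qed

lemma FI_eq_1_imp_DepS:
  assumes fin: "finite (Y ` set_pmf M)" and i: "i \<in> {1..n}"
    and FI: "FI M X n Y i = 1" and T: "T \<subseteq> {1..n}"
  shows "DepS M X T Y = (if i \<in> T then 1 else 0)"
proof -
  let ?A = "{1..n} - {i}"
  define c where "c S = (fact (card S) * fact (n - card S - 1) / fact n :: real)" for S :: "nat set"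
  define d where "d S = DepS M X (S \<union> {i}) Y - DepS M X S Y" for S
  have bounds: "0 \<le> DepS M X S Y" "DepS M X S Y \<le> 1" for S
    unfolding DepS_def using Dep_nonneg Dep_le_1[OF fin] by auto
  have "finite ?A" by simp
  have card_A: "card ?A = n - 1" using i by (simp add: card_Diff_singleton)
  have "Suc (n - 1) = n" using i by simp
  then have weights: "sum c (Pow ?A) = 1"
    using sum_Pow_Shapley_weights[OF \<open>finite ?A\<close>] unfolding c_def card_A by (simp only: diff_commute)
  have marginal: "d S = 1" if "S \<subseteq> ?A" for S
  proof (rule convex_combination_eq_upper_bound_imp_eq[of "Pow ?A" c d])
    show "finite (Pow ?A)" by simp
    show "0 < c S'" for S' unfolding c_def by simp
    show "d S' \<le> 1" for S'
      using bounds[of S'] bounds[of "S' \<union> {i}"] unfolding d_def by linarith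
    show "(\<Sum>S\<in>Pow ?A. c S * d S) = 1"
      using FI unfolding FI_def c_def d_def .
    show "sum c (Pow ?A) = 1" by (rule weights)
    show "S \<in> Pow ?A" using that by (rule PowI)
  qed
  have with_i: "DepS M X (S \<union> {i}) Y = 1" and without_i: "DepS M X S Y = 0" if "S \<subseteq> ?A" for S
    using marginal[OF that] bounds[of S] bounds[of "S \<union> {i}"] unfolding d_def by linarith+
  show ?thesis
  proof (cases "i \<in> T")
    case True
    have "T - {i} \<subseteq> ?A" using T by blast
    moreover have "(T - {i}) \<union> {i} = T" using True by blast
    ultimately show ?thesis using with_i[of "T - {i}"] True by simp
  next
    case False
    then have "T \<subseteq> ?A" using T by blast
    then show ?thesis using without_i False by simp
  qed
qed

theorem mainTheorem9:
  fixes M :: "'w pmf" and X :: "nat \<Rightarrow> 'w \<Rightarrow> 'v" and Y :: "'w \<Rightarrow> 'y"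
    and n i :: nat
  assumes finX: "\<And>j. j \<in> {1..n} \<Longrightarrow> finite (X j ` set_pmf M)"
    and finY: "finite (Y ` set_pmf M)"
    and nonconst: "\<not> (\<exists>c. \<forall>w\<in>set_pmf M. Y w = c)"
    and i: "i \<in> {1..n}"
    and FI1: "FI M X n Y i = 1"
  shows "Dep M (X i) Y = 1
    \<and> (\<forall>j\<in>{1..n} - {i}. FI M X n Y j = 0)
    \<and> (\<forall>j\<in>{1..n} - {i}. \<forall>S. S \<subseteq> {1..n} - {j} \<longrightarrow> DepS M X (S \<union> {j}) Y = DepS M X S Y)"
proof -
  note DepS = FI_eq_1_imp_DepS[OF finY i FI1]
  have own: "Dep M (X i) Y = 1"
    using DepS[of "{i}"] i by (simp add: DepS_singleton)
  have null: "\<forall>j\<in>{1..n} - {i}. \<forall>S. S \<subseteq> {1..n} - {j} \<longrightarrow> DepS M X (S \<union> {j}) Y = DepS M X S Y"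
  proof (intro ballI allI impI)
    fix j S assume "j \<in> {1..n} - {i}" and "S \<subseteq> {1..n} - {j}"
    then have "S \<subseteq> {1..n}" "S \<union> {j} \<subseteq> {1..n}" "i \<in> S \<union> {j} \<longleftrightarrow> i \<in> S" by auto
    then show "DepS M X (S \<union> {j}) Y = DepS M X S Y" by (simp only: DepS)
  qed
  then have "\<forall>j\<in>{1..n} - {i}. FI M X n Y j = 0"
    unfolding FI_def by (auto intro!: sum.neutral)
  with own null show ?thesis by blast
qed

end
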